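(* Let $\Omega\subset\mathbb R^d$ be a bounded Borel set, $f:\Omega\to[0,\infty)$ with $\int_\Omega f=1$, $p\ge1$, $x_1,x_2\in\Omega$, $h_1,h_2:[0,1]\to[0,\infty)$ continuous and non-decreasing, and assume $G$ is Lipschitz. Let $t_1\in\mathbb R$ be arbitrary and define for $n\ge1$ $$t_{n+1}=\frac1n\sum_{m=1}^nG(t_m),$$ with $\psi_n(x)=0$ if $\tau(x)<t_n$ and $\psi_n(x)=1$ otherwise. Then $t_n\to\bar t$ and $\psi_n\to\bar\psi$ uniformly on every compact subset of $\Omega\setminus\{\tau=\bar t\}$.
   Context: $\tau(x)=|x-x_1|^p-|x-x_2|^p$, $m(t)=\int_{\{x\in\Omega:\tau(x)<t\}}f\,dx$, $G(t)=h_2(1-m(t))-h_1(m(t))$. There is a unique $\bar t$ with $G(\bar t)=\bar t$, and $\bar\psi(x)=0$ if $\tau(x)<\bar t$, $\bar\psi(x)=1$ if $\tau(x)>\bar t$ (the unique equilibrium). *)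

theory Defs
  imports "HOL-Analysis.Analysis"
begin

definition tau :: "real \<Rightarrow> 'a::euclidean_space \<Rightarrow> 'a \<Rightarrow> 'a \<Rightarrow> real" where
  "tau p x1 x2 x = norm (x - x1) powr p - norm (x - x2) powr p"

definition mfun :: "'a::euclidean_space set \<Rightarrow> ('a \<Rightarrow> real) \<Rightarrow> real \<Rightarrow> 'a \<Rightarrow> 'a \<Rightarrow> real \<Rightarrow> real" where
  "mfun \<Omega> f p x1 x2 t = integral {x \<in> \<Omega>. tau p x1 x2 x < t} f"

definition Gfun :: "(real \<Rightarrow> real) \<Rightarrow> (real \<Rightarrow> real) \<Rightarrow> 'a::euclidean_space set \<Rightarrow> ('a \<Rightarrow> real)
    \<Rightarrow> real \<Rightarrow> 'a \<Rightarrow> 'a \<Rightarrow> real \<Rightarrow> real" where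
  "Gfun h1 h2 \<Omega> f p x1 x2 t = h2 (1 - mfun \<Omega> f p x1 x2 t) - h1 (mfun \<Omega> f p x1 x2 t)"

definition psi :: "real \<Rightarrow> 'a::euclidean_space \<Rightarrow> 'a \<Rightarrow> real \<Rightarrow> 'a \<Rightarrow> real" where
  "psi p x1 x2 s x = (if tau p x1 x2 x < s then 0 else 1)"

end

theory Submission imports Defs "HOL-Real_Asymp.Real_Asymp" begin

text \<open>The recursion reads t(k+1) = t(k) + (G(t(k)) - t(k)) / k. Since G is non-increasing with fixed
  point tbar, the error a = t(k) - tbar and the increment d = G(t(k)) - G(tbar) have opposite signs, and
  |d| \<le> L |a|. Hence k |t(k+1) - tbar| = |(k - 1) a + d| \<le> (k - 1) |a| once L \<le> 2 (k - 1), so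
  (k - 1) |t(k) - tbar| is eventually non-increasing and t(k) - tbar = O(1/k). On a compact set avoiding
  the level set {\<tau> = tbar} the continuous function |\<tau> - tbar| is bounded away from 0, so the threshold
  profiles \<psi>(n) eventually coincide with the limit profile there.\<close>

lemma continuous_on_tau:
  assumes "p > 0"
  shows "continuous_on UNIV (tau p x1 x2)"
  unfolding tau_def using assms by (intro continuous_intros continuous_on_powr') auto

lemma integrable_on_lebesgue_subset:
  fixes f :: "'a::euclidean_space \<Rightarrow> real"
  assumes "f integrable_on \<Omega>" "\<forall>x\<in>\<Omega>. f x \<ge> 0" "S \<subseteq> \<Omega>" "S \<in> sets lebesgue"
  shows "f integrable_on S"
proof -
  have "f absolutely_integrable_on \<Omega>"
    using assms(2) by (intro nonnegative_absolutely_integrable_1[OF assms(1)]) auto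
  then have "f absolutely_integrable_on S"
    using assms(3,4) set_integrable_subset by blast
  then show ?thesis
    by (simp add: absolutely_integrable_on_def)
qed

lemma integrable_on_tau_sublevel:
  fixes f :: "'a::euclidean_space \<Rightarrow> real"
  assumes "\<Omega> \<in> sets borel" "\<forall>x\<in>\<Omega>. f x \<ge> 0" "f integrable_on \<Omega>" "p > 0"
  shows "f integrable_on {x \<in> \<Omega>. tau p x1 x2 x < s}"
proof (rule integrable_on_lebesgue_subset[OF assms(3,2)])
  have "open {x. tau p x1 x2 x < s}"
    using continuous_on_tau[OF assms(4)] continuous_on_const by (rule open_Collect_less)
  then have "\<Omega> \<inter> {x. tau p x1 x2 x < s} \<in> sets borel"
    using assms(1) by auto
  moreover have "{x \<in> \<Omega>. tau p x1 x2 x < s} = \<Omega> \<inter> {x. tau p x1 x2 x < s}"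
    by blast
  ultimately show "{x \<in> \<Omega>. tau p x1 x2 x < s} \<in> sets lebesgue"
    by simp
qed auto

lemma mfun_bounds_and_mono:
  assumes "\<Omega> \<in> sets borel" "\<forall>x\<in>\<Omega>. f x \<ge> 0" "(f has_integral 1) \<Omega>" "p > 0"
  shows "mfun \<Omega> f p x1 x2 s \<in> {0..1}" and "mono (mfun \<Omega> f p x1 x2)"
proof -
  have int_\<Omega>: "f integrable_on \<Omega>"
    using assms(3) by blast
  note int = integrable_on_tau_sublevel[OF assms(1,2) int_\<Omega> assms(4)]
  have "0 \<le> mfun \<Omega> f p x1 x2 s"
    unfolding mfun_def using assms(2) by (intro integral_nonneg[OF int]) auto
  moreover have "mfun \<Omega> f p x1 x2 s \<le> integral \<Omega> f"
    unfolding mfun_def using assms(2) by (intro integral_subset_le[OF _ int int_\<Omega>]) auto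
  ultimately show "mfun \<Omega> f p x1 x2 s \<in> {0..1}"
    using assms(3) by (simp add: integral_unique)
  show "mono (mfun \<Omega> f p x1 x2)"
    unfolding mfun_def mono_def using assms(2) by (auto intro!: integral_subset_le[OF _ int int])
qed

lemma antimono_Gfun:
  assumes "\<Omega> \<in> sets borel" "\<forall>x\<in>\<Omega>. f x \<ge> 0" "(f has_integral 1) \<Omega>" "p > 0"
    and "mono_on {0..1} h1" "mono_on {0..1} h2"
  shows "antimono (Gfun h1 h2 \<Omega> f p x1 x2)"
proof (rule antimonoI)
  fix s r :: real
  assume "s \<le> r"
  let ?m = "mfun \<Omega> f p x1 x2"
  have m01: "?m u \<in> {0..1}" for u
    by (rule mfun_bounds_and_mono(1)[OF assms(1-4)])
  have "?m s \<le> ?m r"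
    using mfun_bounds_and_mono(2)[OF assms(1-4)] \<open>s \<le> r\<close> by (rule monoD)
  then have "h2 (1 - ?m r) \<le> h2 (1 - ?m s)" "h1 (?m s) \<le> h1 (?m r)"
    using m01[of s] m01[of r] by (auto intro!: mono_onD[OF assms(6)] mono_onD[OF assms(5)])
  then show "Gfun h1 h2 \<Omega> f p x1 x2 r \<le> Gfun h1 h2 \<Omega> f p x1 x2 s"
    unfolding Gfun_def by linarith
qed

lemma abs_add_le_of_opposite_sign:
  fixes a b c d :: real
  assumes "d * a \<le> 0" "\<bar>d\<bar> \<le> c * \<bar>a\<bar>" "c \<le> 2 * b"
  shows "\<bar>b * a + d\<bar> \<le> b * \<bar>a\<bar>"
proof (cases "a \<ge> 0")
  case True
  then have "d \<le> 0" "- d \<le> 2 * b * a"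
    using assms mult_right_mono[OF assms(3) True]
    by (auto simp: mult_le_0_iff abs_if split: if_splits)
  then show ?thesis
    using True by (simp add: abs_le_iff algebra_simps)
next
  case False
  have "d \<ge> 0" "d \<le> c * - a"
    using False assms(1,2) by (auto simp: mult_le_0_iff abs_if split: if_splits)
  moreover have "c * - a \<le> 2 * b * - a"
    using False assms(3) by (intro mult_right_mono) auto
  ultimately have "d \<ge> 0" "d \<le> 2 * b * - a"
    by linarith+
  then show ?thesis
    using False by (simp add: abs_le_iff algebra_simps)
qed

lemma cesaro_recursion_step:
  fixes G :: "real \<Rightarrow> real"
  assumes rec: "\<forall>n\<ge>1. t (n + 1) = (1 / real n) * (\<Sum>m=1..n. G (t m))" and "k \<ge> 2"
  shows "t (k + 1) = t k + (G (t k) - t k) / real k"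
proof -
  define n where "n = k - 1"
  have n: "k = n + 1" "n \<ge> 1"
    using \<open>k \<ge> 2\<close> by (auto simp: n_def)
  have "(\<Sum>m=1..n. G (t m)) = real n * t k"
    using rec[rule_format, OF \<open>n \<ge> 1\<close>] n by simp
  then have "t (k + 1) = (real n * t k + G (t k)) / real k"
    using rec[rule_format, of k] n by simp
  then show ?thesis
    using n by (simp add: field_simps)
qed

lemma cesaro_iteration_error_step:
  fixes G :: "real \<Rightarrow> real"
  assumes "antimono G" "\<And>s r. \<bar>G s - G r\<bar> \<le> L * \<bar>s - r\<bar>" "G tbar = tbar"
    and rec: "\<forall>n\<ge>1. t (n + 1) = (1 / real n) * (\<Sum>m=1..n. G (t m))"
    and "k \<ge> 2" "L + 2 \<le> real k"
  shows "real k * \<bar>t (k + 1) - tbar\<bar> \<le> (real k - 1) * \<bar>t k - tbar\<bar>"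
proof -
  define a where "a = t k - tbar"
  define d where "d = G (t k) - G tbar"
  have "real k * (t (k + 1) - tbar) = (real k - 1) * a + d"
    using cesaro_recursion_step[OF rec \<open>k \<ge> 2\<close>] \<open>k \<ge> 2\<close> assms(3)
    by (simp add: a_def d_def field_simps)
  moreover have "d * a \<le> 0"
    using antimonoD[OF assms(1), of tbar "t k"] antimonoD[OF assms(1), of "t k" tbar]
    by (cases "t k \<ge> tbar") (auto simp: a_def d_def mult_le_0_iff)
  then have "\<bar>(real k - 1) * a + d\<bar> \<le> (real k - 1) * \<bar>a\<bar>"
    using assms(2,6) by (intro abs_add_le_of_opposite_sign[where c = L]) (auto simp: a_def d_def)
  ultimately show ?thesis
    using \<open>k \<ge> 2\<close> by (simp add: a_def abs_mult)
qed

lemma cesaro_iteration_tendsto_fixpoint: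
  fixes G :: "real \<Rightarrow> real"
  assumes "antimono G" "\<And>s r. \<bar>G s - G r\<bar> \<le> L * \<bar>s - r\<bar>" "G tbar = tbar"
    and rec: "\<forall>n\<ge>1. t (n + 1) = (1 / real n) * (\<Sum>m=1..n. G (t m))"
  shows "t \<longlonglongrightarrow> tbar"
proof -
  define N where "N = max 2 (nat \<lceil>L\<rceil> + 2)"
  define C where "C = (real N - 1) * \<bar>t N - tbar\<bar>"
  have bound: "(real k - 1) * \<bar>t k - tbar\<bar> \<le> C" if "k \<ge> N" for k
    using that
  proof (induction k rule: dec_induct)
    case base
    then show ?case by (simp add: C_def)
  next
    case (step k)
    then have "real k * \<bar>t (k + 1) - tbar\<bar> \<le> (real k - 1) * \<bar>t k - tbar\<bar>"
      by (intro cesaro_iteration_error_step[OF assms]) (auto simp: N_def, linarith)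
    then show ?case
      using step.IH by simp
  qed
  have "(\<lambda>k. t k - tbar) \<longlonglongrightarrow> 0"
  proof (rule Lim_null_comparison)
    show "\<forall>\<^sub>F k in sequentially. norm (t k - tbar) \<le> C / (real k - 1)"
      using eventually_ge_at_top[of N]
    proof eventually_elim
      case (elim k)
      then have "real k - 1 > 0"
        by (simp add: N_def)
      then show ?case
        using bound[OF elim] by (simp add: field_simps)
    qed
    show "(\<lambda>k. C / (real k - 1)) \<longlonglongrightarrow> 0"
      by real_asymp
  qed
  then show ?thesis
    by (rule LIM_zero_cancel)
qed

lemma uniform_limit_psi:
  assumes "p > 0" "t \<longlonglongrightarrow> tbar" "compact K" "\<forall>x\<in>K. tau p x1 x2 x \<noteq> tbar"
  shows "uniform_limit K (\<lambda>n. psi p x1 x2 (t n)) (psi p x1 x2 tbar) sequentially"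
proof (cases "K = {}")
  case True
  then show ?thesis by (simp add: uniform_limit_iff)
next
  case False
  define g where "g x = \<bar>tau p x1 x2 x - tbar\<bar>" for x
  have "continuous_on K g"
    unfolding g_def using continuous_on_tau[OF assms(1)]
    by (intro continuous_intros) (auto intro: continuous_on_subset)
  then have "compact (g ` K)"
    using assms(3) by (rule compact_continuous_image)
  then obtain z where z: "z \<in> g ` K" "\<And>y. y \<in> g ` K \<Longrightarrow> z \<le> y"
    using compact_attains_inf[of "g ` K"] False by blast
  have "z > 0"
    using z(1) assms(4) by (auto simp: g_def)
  have "\<forall>\<^sub>F n in sequentially. dist (t n) tbar < z"
    using assms(2) \<open>z > 0\<close> by (rule tendstoD)
  then have "\<forall>\<^sub>F n in sequentially. \<forall>x\<in>K. psi p x1 x2 (t n) x = psi p x1 x2 tbar x"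
  proof eventually_elim
    case (elim n)
    show ?case
    proof
      fix x
      assume "x \<in> K"
      then have "z \<le> g x"
        using z(2) by auto
      then show "psi p x1 x2 (t n) x = psi p x1 x2 tbar x"
        using elim by (auto simp: psi_def g_def dist_real_def)
    qed
  qed
  then show ?thesis
    unfolding uniform_limit_iff by (auto elim: eventually_mono)
qed

theorem theorem5p15:
  fixes \<Omega> :: "'a::euclidean_space set" and f :: "'a \<Rightarrow> real" and p :: real
    and x1 x2 :: 'a and h1 h2 :: "real \<Rightarrow> real" and t :: "nat \<Rightarrow> real" and tbar :: real
  assumes "\<Omega> \<in> sets borel" and "bounded \<Omega>"
    and "\<forall>x\<in>\<Omega>. f x \<ge> 0" and "(f has_integral 1) \<Omega>"
    and "p \<ge> 1" and "x1 \<in> \<Omega>" and "x2 \<in> \<Omega>"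
    and "continuous_on {0..1} h1" and "mono_on {0..1} h1" and "\<forall>s\<in>{0..1}. h1 s \<ge> 0"
    and "continuous_on {0..1} h2" and "mono_on {0..1} h2" and "\<forall>s\<in>{0..1}. h2 s \<ge> 0"
    and "\<exists>L. \<forall>s r. \<bar>Gfun h1 h2 \<Omega> f p x1 x2 s - Gfun h1 h2 \<Omega> f p x1 x2 r\<bar> \<le> L * \<bar>s - r\<bar>"
    and "Gfun h1 h2 \<Omega> f p x1 x2 tbar = tbar"
    and "\<forall>n\<ge>1. t (n + 1) = (1 / real n) * (\<Sum>m=1..n. Gfun h1 h2 \<Omega> f p x1 x2 (t m))"
  shows "t \<longlonglongrightarrow> tbar \<and>
    (\<forall>K. compact K \<and> K \<subseteq> \<Omega> - {x. tau p x1 x2 x = tbar} \<longrightarrow>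
       uniform_limit K (\<lambda>n. psi p x1 x2 (t n)) (psi p x1 x2 tbar) sequentially)"
proof -
  have "p > 0"
    using assms(5) by simp
  obtain L where "\<And>s r. \<bar>Gfun h1 h2 \<Omega> f p x1 x2 s - Gfun h1 h2 \<Omega> f p x1 x2 r\<bar> \<le> L * \<bar>s - r\<bar>"
    using assms(14) by blast
  moreover have "antimono (Gfun h1 h2 \<Omega> f p x1 x2)"
    using assms(1,3,4) \<open>p > 0\<close> assms(9,12) by (rule antimono_Gfun)
  ultimately have "t \<longlonglongrightarrow> tbar"
    using assms(15,16) by (intro cesaro_iteration_tendsto_fixpoint)
  then show ?thesis
    using uniform_limit_psi[OF \<open>p > 0\<close>] by blast
qed

end
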